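(* Let $X$ be a finite quandle, $\Lambda$ a finite abelian group, $\phi$ a quandle $2$-cocycle $X\times X\to\Lambda$, and suppose $Q=\Lambda\times_\phi X$ is connected. Let $K$ be an oriented knot and $T$ a $1$-tangle diagram whose closure is $K$, with top arc $b_0$ and bottom arc $b_1$. For $x\in X$ let $\mathrm{Col}^{x,x}_X(T)$ be the set of colorings $C$ of $T$ by $X$ with $C(b_0)=C(b_1)=x$, and set $\Phi^x_\phi(K)=\sum_{C\in \mathrm{Col}^{x,x}_X(T)} B_\phi(K,C)\in\mathbb{Z}[\Lambda]$. Then for every $x\in X$, $$\Phi_\phi(K)=\sum_{y\in X}\Phi^y_\phi(K)=|X|\,\Phi^x_\phi(K).$$
   Context: A quandle is a set with operation $*$ satisfying $a*a=a$; unique right division; $(a*b)*c=(a*c)*(b*c)$. $R_a(x)=x*a$, $\mathrm{Inn}$ generated by the $R_a$, connected means $\mathrm{Inn}$ acts transitively. A quandle $2$-cocycle with values in an abelian group $\Lambda$ (written multiplicatively) is $\phi:X\times X\to\Lambda$ with $\phi(a,a)=1$ and $\phi(a,b)\phi(a*b,c)=\phi(a,c)\phi(a*c,b*c)$ for all $a,b,c$; then $\Lambda\times_\phi X$ is the quandle on $\Lambda\times X$ with $(\lambda,a)*(\mu,b)=(\lambda\phi(a,b),a*b)$ (abelian extension). A coloring of an oriented diagram by $X$ assigns colors to arcs so that at each crossing $\tau$, with source colors $(x_\tau,y_\tau)$ (incoming under-arc color $x_\tau$, over-arc color $y_\tau$), the outgoing under-arc has color $x_\tau*y_\tau$; $\epsilon(\tau)=\pm1$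 is the sign of $\tau$. For a coloring $C$, $B_\phi(K,C)=\prod_\tau \phi(x_\tau,y_\tau)^{\epsilon(\tau)}$. The cocycle invariant is $\Phi_\phi(K)=\sum_C B_\phi(K,C)\in\mathbb{Z}[\Lambda]$, summed over all colorings of a diagram of $K$ by $X$. A $1$-tangle is a properly embedded oriented arc in a $3$-ball up to isotopy rel boundary, oriented top to bottom; its closure joins the endpoints by a trivial arc; colorings of $1$-tangles need not give equal colors to the end arcs, and $B_\phi$ is defined for them by the same formula. *)

theory Defs
  imports Main
begin

definition is_quandle :: "('a \<Rightarrow> 'a \<Rightarrow> 'a) \<Rightarrow> bool" where
  "is_quandle op \<longleftrightarrow>
     (\<forall>a. op a a = a) \<and>
     (\<forall>b. bij (\<lambda>a. op a b)) \<and>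
     (\<forall>a b c. op (op a b) c = op (op a c) (op b c))"

text \<open>Inn(Q) is generated by the right translations R_q; its orbit relation is the
  reflexive-transitive closure of the steps a -> a*q and their inverses.\<close>
definition quandle_connected :: "('a \<Rightarrow> 'a \<Rightarrow> 'a) \<Rightarrow> bool" where
  "quandle_connected op \<longleftrightarrow>
     (\<forall>a b. (a, b) \<in> ({(u, op u v) | u v. True} \<union> {(op u v, u) | u v. True})\<^sup>*)"

text \<open>The coefficient group Lambda is written additively (class ab_group_add).\<close>
definition is_quandle_2cocycle ::
  "('a \<Rightarrow> 'a \<Rightarrow> 'a) \<Rightarrow> ('a \<Rightarrow> 'a \<Rightarrow> 'b::ab_group_add) \<Rightarrow> bool" where
  "is_quandle_2cocycle op \<phi> \<longleftrightarrow>
     (\<forall>a. \<phi> a a = 0) \<and>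
     (\<forall>a b c. \<phi> a b + \<phi> (op a b) c = \<phi> a c + \<phi> (op a c) (op b c))"

definition ext_op ::
  "('a \<Rightarrow> 'a \<Rightarrow> 'a) \<Rightarrow> ('a \<Rightarrow> 'a \<Rightarrow> 'b::ab_group_add) \<Rightarrow> ('b \<times> 'a) \<Rightarrow> ('b \<times> 'a) \<Rightarrow> ('b \<times> 'a)" where
  "ext_op op \<phi> = (\<lambda>(l, a) (m, b). (l + \<phi> a b, op a b))"

text \<open>A (closed, based) knot diagram with n crossings: walking along the oriented
  knot from the base point we meet 2n crossing passages at positions 0..2n-1.
  gcross p is the crossing met at position p, gover p says whether we pass over,
  gsign c is the sign of crossing c.  The 1-tangle T is obtained by cutting
  at the base point (between position 2n-1 and position 0).\<close>
record gauss_diagram =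
  ncross :: nat
  gcross :: "nat \<Rightarrow> nat"
  gover :: "nat \<Rightarrow> bool"
  gsign :: "nat \<Rightarrow> int"

definition valid_diagram :: "gauss_diagram \<Rightarrow> bool" where
  "valid_diagram D \<longleftrightarrow>
     (\<forall>p < 2 * ncross D. gcross D p < ncross D) \<and>
     (\<forall>c < ncross D. \<exists>!p. p < 2 * ncross D \<and> gcross D p = c \<and> gover D p) \<and>
     (\<forall>c < ncross D. \<exists>!p. p < 2 * ncross D \<and> gcross D p = c \<and> \<not> gover D p) \<and>
     (\<forall>c < ncross D. gsign D c = 1 \<or> gsign D c = -1)"

definition overpos :: "gauss_diagram \<Rightarrow> nat \<Rightarrow> nat" where
  "overpos D c = (THE p. p < 2 * ncross D \<and> gcross D p = c \<and> gover D p)"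

definition underpos :: "gauss_diagram \<Rightarrow> nat \<Rightarrow> nat" where
  "underpos D c = (THE p. p < 2 * ncross D \<and> gcross D p = c \<and> \<not> gover D p)"

text \<open>Half-edges (darts): (p, True) = outgoing edge at position p, (p, False) = incoming.\<close>
definition darts :: "gauss_diagram \<Rightarrow> (nat \<times> bool) set" where
  "darts D = {0..<2 * ncross D} \<times> UNIV"

definition dart_alpha :: "gauss_diagram \<Rightarrow> nat \<times> bool \<Rightarrow> nat \<times> bool" where
  "dart_alpha D d = (let m = 2 * ncross D; p = fst d in
     if snd d then ((p + 1) mod m, False) else ((p + m - 1) mod m, True))"

text \<open>Counterclockwise rotation of the four darts at a crossing, as dictated by the
  crossing sign: positive: oo, uo, oi, ui; negative: oo, ui, oi, uo.\<close>
definition dart_sigma :: "gauss_diagram \<Rightarrow> nat \<times> bool \<Rightarrow> nat \<times> bool" where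
  "dart_sigma D d = (let c = gcross D (fst d); u = underpos D c; q = overpos D c;
       oi = (q, False); oo = (q, True); ui = (u, False); uo = (u, True) in
     if gsign D c = 1 then
       (if d = oo then uo else if d = uo then oi else if d = oi then ui else oo)
     else
       (if d = oo then ui else if d = ui then oi else if d = oi then uo else oo))"

definition face_perm :: "gauss_diagram \<Rightarrow> nat \<times> bool \<Rightarrow> nat \<times> bool" where
  "face_perm D = dart_sigma D \<circ> dart_alpha D"

definition diagram_faces :: "gauss_diagram \<Rightarrow> (nat \<times> bool) set set" where
  "diagram_faces D = (\<lambda>d. {(face_perm D ^^ k) d | k. True}) ` darts D"

text \<open>Euler: V - E + F = 2 with V = n, E = 2n, i.e. the diagram lies on the sphere/plane.\<close>
definition planar_diagram :: "gauss_diagram \<Rightarrow> bool" where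
  "planar_diagram D \<longleftrightarrow> ncross D = 0 \<or> card (diagram_faces D) = ncross D + 2"

text \<open>Segment k enters position k; nx k is the segment leaving position k.
  At an under-passage of crossing c with over-arc color y: positive crossing:
  out = in * y; negative crossing: in = out * y (standard source-region convention).\<close>
definition col_ok ::
  "('a \<Rightarrow> 'a \<Rightarrow> 'a) \<Rightarrow> gauss_diagram \<Rightarrow> (nat \<Rightarrow> 'a) \<Rightarrow> (nat \<Rightarrow> nat) \<Rightarrow> bool" where
  "col_ok op D f nx \<longleftrightarrow>
     (\<forall>k < 2 * ncross D.
        if gover D k then f (nx k) = f k
        else (let c = gcross D k; y = f (overpos D c) in
              if gsign D c = 1 then f (nx k) = op (f k) y else f k = op (f (nx k)) y))"

definition boltzmann ::
  "('a \<Rightarrow> 'a \<Rightarrow> 'b::ab_group_add) \<Rightarrow> gauss_diagram \<Rightarrow> (nat \<Rightarrow> 'a) \<Rightarrow> (nat \<Rightarrow> nat) \<Rightarrow> 'b" where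
  "boltzmann \<phi> D f nx = (\<Sum>c < ncross D.
      let u = underpos D c; y = f (overpos D c) in
      if gsign D c = 1 then \<phi> (f u) y else - \<phi> (f (nx u)) y)"

text \<open>Closed knot diagram: segments 0..2n-1 cyclically (one segment if n = 0).\<close>
definition knot_next :: "gauss_diagram \<Rightarrow> nat \<Rightarrow> nat" where
  "knot_next D k = Suc k mod (2 * ncross D)"

definition knot_colorings :: "('a \<Rightarrow> 'a \<Rightarrow> 'a) \<Rightarrow> gauss_diagram \<Rightarrow> 'a list set" where
  "knot_colorings op D =
     {cl. length cl = max 1 (2 * ncross D) \<and> col_ok op D (nth cl) (knot_next D)}"

text \<open>1-tangle: segments 0..2n; segment 0 lies on the top arc b0, segment 2n on b1.\<close>
definition tangle_colorings :: "('a \<Rightarrow> 'a \<Rightarrow> 'a) \<Rightarrow> gauss_diagram \<Rightarrow> 'a list set" where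
  "tangle_colorings op D =
     {cl. length cl = 2 * ncross D + 1 \<and> col_ok op D (nth cl) Suc}"

text \<open>Elements of Z[Lambda] are represented as functions Lambda -> int (coefficients).\<close>
definition cocycle_invariant ::
  "('a \<Rightarrow> 'a \<Rightarrow> 'a) \<Rightarrow> ('a \<Rightarrow> 'a \<Rightarrow> 'b::ab_group_add) \<Rightarrow> gauss_diagram \<Rightarrow> 'b \<Rightarrow> int" where
  "cocycle_invariant op \<phi> D = (\<lambda>l.
     int (card {cl \<in> knot_colorings op D. boltzmann \<phi> D (nth cl) (knot_next D) = l}))"

definition tangle_invariant ::
  "('a \<Rightarrow> 'a \<Rightarrow> 'a) \<Rightarrow> ('a \<Rightarrow> 'a \<Rightarrow> 'b::ab_group_add) \<Rightarrow> gauss_diagram \<Rightarrow> 'a \<Rightarrow> 'b \<Rightarrow> int" where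
  "tangle_invariant op \<phi> D x = (\<lambda>l.
     int (card {cl \<in> tangle_colorings op D.
                  cl ! 0 = x \<and> cl ! (2 * ncross D) = x \<and> boltzmann \<phi> D (nth cl) Suc = l}))"

end

theory Submission
  imports Defs
begin

text \<open>Cutting the closed diagram at the base point identifies colorings of K with colorings
  of the tangle T whose two end arcs agree, without changing Boltzmann weights.  Right
  translation by any b maps colorings with end colors x, x bijectively to those with end
  colors x*b, and changes the weight by the telescoping sum of phi(C(s), b) - phi(C(s'), b)
  over consecutive segments s, s', which vanishes because the end colors agree.  Hence
  Phi^x is constant along the orbits of Inn(X), and X is connected because it is a quotient
  of the connected quandle Q.\<close>

lemma overpos_spec:
  assumes "valid_diagram D" "c < ncross D"
  shows "overpos D c < 2 * ncross D \<and> gcross D (overpos D c) = c \<and> gover D (overpos D c)"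
proof -
  have "\<exists>!p. p < 2 * ncross D \<and> gcross D p = c \<and> gover D p"
    using assms unfolding valid_diagram_def by simp
  from theI'[OF this] show ?thesis unfolding overpos_def .
qed

lemma underpos_spec:
  assumes "valid_diagram D" "c < ncross D"
  shows "underpos D c < 2 * ncross D \<and> gcross D (underpos D c) = c \<and> \<not> gover D (underpos D c)"
proof -
  have "\<exists>!p. p < 2 * ncross D \<and> gcross D p = c \<and> \<not> gover D p"
    using assms unfolding valid_diagram_def by simp
  from theI'[OF this] show ?thesis unfolding underpos_def .
qed

lemma gcross_less: "valid_diagram D \<Longrightarrow> k < 2 * ncross D \<Longrightarrow> gcross D k < ncross D"
  unfolding valid_diagram_def by simp

lemma underpos_gcross:
  assumes "valid_diagram D" "k < 2 * ncross D" "\<not> gover D k"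
  shows "underpos D (gcross D k) = k"
proof -
  have "\<exists>!p. p < 2 * ncross D \<and> gcross D p = gcross D k \<and> \<not> gover D p"
    using assms gcross_less unfolding valid_diagram_def by simp
  then show ?thesis unfolding underpos_def by (rule the1_equality) (use assms in auto)
qed

lemma bij_betw_underpos:
  assumes "valid_diagram D"
  shows "bij_betw (underpos D) {..<ncross D} {k. k < 2 * ncross D \<and> \<not> gover D k}"
proof (rule bij_betw_imageI)
  show "inj_on (underpos D) {..<ncross D}"
    by (rule inj_onI) (metis assms lessThan_iff underpos_spec)
  show "underpos D ` {..<ncross D} = {k. k < 2 * ncross D \<and> \<not> gover D k}"
  proof (intro equalityI subsetI)
    fix k assume "k \<in> {k. k < 2 * ncross D \<and> \<not> gover D k}"
    then have "k = underpos D (gcross D k)" "gcross D k < ncross D"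
      using assms underpos_gcross gcross_less by auto
    then show "k \<in> underpos D ` {..<ncross D}" by blast
  qed (use assms underpos_spec in auto)
qed

lemma col_ok_cong:
  assumes "valid_diagram D"
    and "\<And>k. k < 2 * ncross D \<Longrightarrow> f k = g k \<and> f (nx1 k) = g (nx2 k)"
  shows "col_ok op D f nx1 = col_ok op D g nx2"
proof -
  have "\<And>k. k < 2 * ncross D \<Longrightarrow> f (overpos D (gcross D k)) = g (overpos D (gcross D k))"
    using assms overpos_spec gcross_less by blast
  then show ?thesis unfolding col_ok_def using assms(2) by (auto simp: Let_def)
qed

lemma boltzmann_cong:
  assumes "valid_diagram D"
    and "\<And>k. k < 2 * ncross D \<Longrightarrow> f k = g k \<and> f (nx1 k) = g (nx2 k)"
  shows "boltzmann \<phi> D f nx1 = boltzmann \<phi> D g nx2"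
  unfolding boltzmann_def
proof (rule sum.cong)
  fix c assume "c \<in> {..<ncross D}"
  then have "underpos D c < 2 * ncross D" "overpos D c < 2 * ncross D"
    using assms(1) overpos_spec underpos_spec by auto
  then show "(let u = underpos D c; y = f (overpos D c) in
      if gsign D c = 1 then \<phi> (f u) y else - \<phi> (f (nx1 u)) y) =
    (let u = underpos D c; y = g (overpos D c) in
      if gsign D c = 1 then \<phi> (g u) y else - \<phi> (g (nx2 u)) y)"
    using assms(2) by (simp add: Let_def)
qed simp

lemma closing_segments:
  assumes "length cl = 2 * ncross D" "k < 2 * ncross D"
  shows "(cl @ [cl ! 0]) ! k = cl ! k \<and> (cl @ [cl ! 0]) ! Suc k = cl ! knot_next D k"
proof (cases "Suc k < 2 * ncross D")
  case False
  then have "Suc k = 2 * ncross D" using assms by simp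
  then show ?thesis using assms by (simp add: nth_append knot_next_def)
qed (use assms in \<open>simp add: nth_append knot_next_def\<close>)

lemma bij_betw_knot_colorings_tangle_colorings:
  assumes v: "valid_diagram D" and "ncross D \<noteq> 0"
  shows "bij_betw (\<lambda>cl. cl @ [cl ! 0]) (knot_colorings op D)
           {cl \<in> tangle_colorings op D. cl ! 0 = cl ! (2 * ncross D)}"
proof (rule bij_betw_imageI)
  show "inj_on (\<lambda>cl. cl @ [cl ! 0]) (knot_colorings op D)" by (rule inj_onI) simp
  have col: "col_ok op D (nth (cl @ [cl ! 0])) Suc = col_ok op D (nth cl) (knot_next D)"
    if "length cl = 2 * ncross D" for cl
    by (rule col_ok_cong[OF v]) (use closing_segments[OF that] in blast)
  show "(\<lambda>cl. cl @ [cl ! 0]) ` knot_colorings op D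
          = {cl \<in> tangle_colorings op D. cl ! 0 = cl ! (2 * ncross D)}"
  proof (intro equalityI subsetI)
    fix cl' assume "cl' \<in> (\<lambda>cl. cl @ [cl ! 0]) ` knot_colorings op D"
    then show "cl' \<in> {cl \<in> tangle_colorings op D. cl ! 0 = cl ! (2 * ncross D)}"
      using assms col by (auto simp: knot_colorings_def tangle_colorings_def nth_append)
  next
    fix cl' assume cl': "cl' \<in> {cl \<in> tangle_colorings op D. cl ! 0 = cl ! (2 * ncross D)}"
    define cl where "cl = butlast cl'"
    have len': "length cl' = 2 * ncross D + 1" using cl' by (simp add: tangle_colorings_def)
    then have len: "length cl = 2 * ncross D" unfolding cl_def by simp
    have "cl' = cl @ [cl' ! (2 * ncross D)]"
      unfolding cl_def using len' by (metis append_butlast_last_id last_conv_nth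
          diff_add_inverse2 list.size(3) add_is_0 zero_neq_one)
    moreover have "cl' ! 0 = cl ! 0" unfolding cl_def using len' assms(2) by (simp add: nth_butlast)
    ultimately have "cl' = cl @ [cl ! 0]" using cl' by simp
    moreover have "cl \<in> knot_colorings op D"
      using cl' col[OF len] len assms(2) \<open>cl' = cl @ [cl ! 0]\<close>
      by (auto simp: knot_colorings_def tangle_colorings_def)
    ultimately show "cl' \<in> (\<lambda>cl. cl @ [cl ! 0]) ` knot_colorings op D" by blast
  qed
qed

lemma boltzmann_closing:
  assumes "valid_diagram D" "length cl = 2 * ncross D"
  shows "boltzmann \<phi> D (nth (cl @ [cl ! 0])) Suc = boltzmann \<phi> D (nth cl) (knot_next D)"
  by (rule boltzmann_cong[OF assms(1)]) (use closing_segments[OF assms(2)] in blast)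

lemma col_ok_right_translate:
  assumes "is_quandle op"
  shows "col_ok op D (\<lambda>k. op (f k) b) nx = col_ok op D f nx"
proof -
  have inj: "op p b = op q b \<longleftrightarrow> p = q" for p q
    using assms unfolding is_quandle_def bij_def inj_def by blast
  have dist: "op (op p q) b = op (op p b) (op q b)" for p q
    using assms unfolding is_quandle_def by blast
  show ?thesis unfolding col_ok_def Let_def by (simp add: dist[symmetric] inj)
qed

lemma boltzmann_right_translate:
  assumes q: "is_quandle op" and cc: "is_quandle_2cocycle op \<phi>"
    and v: "valid_diagram D" and col: "col_ok op D f Suc"
    and ends: "f 0 = f (2 * ncross D)"
  shows "boltzmann \<phi> D (\<lambda>k. op (f k) b) Suc = boltzmann \<phi> D f Suc"
proof -
  define n where "n = ncross D"
  define g where "g k = \<phi> (f k) b" for k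
  define h where "h k = g (Suc k) - g k" for k
  have coc: "\<phi> p r + \<phi> (op p r) s = \<phi> p s + \<phi> (op p s) (op r s)" for p r s
    using cc unfolding is_quandle_2cocycle_def by blast
  txt \<open>Cocycle condition with third argument b: translating changes the term of c by h at its
    under-passage.\<close>
  have crossing: "(let u = underpos D c; y = op (f (overpos D c)) b in
      if gsign D c = 1 then \<phi> (op (f u) b) y else - \<phi> (op (f (Suc u)) b) y)
    = (let u = underpos D c; y = f (overpos D c) in
      if gsign D c = 1 then \<phi> (f u) y else - \<phi> (f (Suc u)) y) + h (underpos D c)"
    if "c < n" for c
  proof -
    let ?u = "underpos D c" and ?y = "f (overpos D c)"
    have "?u < 2 * n" "gcross D ?u = c" "\<not> gover D ?u"
      using underpos_spec[OF v] that n_def by auto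
    then have "if gsign D c = 1 then f (Suc ?u) = op (f ?u) ?y else f ?u = op (f (Suc ?u)) ?y"
      using col unfolding col_ok_def n_def by (auto simp: Let_def)
    then show ?thesis using coc[of "f ?u" ?y b] coc[of "f (Suc ?u)" ?y b]
      by (cases "gsign D c = 1") (simp_all add: Let_def h_def g_def algebra_simps)
  qed
  have "boltzmann \<phi> D (\<lambda>k. op (f k) b) Suc = boltzmann \<phi> D f Suc + (\<Sum>c<n. h (underpos D c))"
    unfolding boltzmann_def n_def[symmetric] using crossing by (simp add: sum.distrib)
  also have "(\<Sum>c<n. h (underpos D c)) = (\<Sum>k\<in>{k. k < 2 * n \<and> \<not> gover D k}. h k)"
    using sum.reindex_bij_betw[OF bij_betw_underpos[OF v], of h] n_def by simp
  also have "\<dots> = (\<Sum>k<2 * n. h k)"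
  proof (rule sum.mono_neutral_left)
    show "\<forall>k\<in>{..<2 * n} - {k. k < 2 * n \<and> \<not> gover D k}. h k = 0"
      using col unfolding col_ok_def h_def g_def n_def by auto
  qed auto
  also have "\<dots> = 0"
    unfolding h_def using sum_lessThan_telescope[of g "2 * n"] ends n_def by (simp add: g_def)
  finally show ?thesis by simp
qed

definition tangle_colorings_at :: "('a \<Rightarrow> 'a \<Rightarrow> 'a) \<Rightarrow> gauss_diagram \<Rightarrow> 'a \<Rightarrow> 'a list set" where
  "tangle_colorings_at op D y =
     {cl \<in> tangle_colorings op D. cl ! 0 = y \<and> cl ! (2 * ncross D) = y}"

lemma tangle_invariant_eq_card:
  "tangle_invariant op \<phi> D y l
     = int (card {cl \<in> tangle_colorings_at op D y. boltzmann \<phi> D (nth cl) Suc = l})"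
  unfolding tangle_invariant_def tangle_colorings_at_def by (simp add: conj_assoc)

lemma map_right_translate_tangle_colorings_iff:
  assumes "is_quandle op" "valid_diagram D"
  shows "map (\<lambda>a. op a b) cl \<in> tangle_colorings op D \<longleftrightarrow> cl \<in> tangle_colorings op D"
proof (cases "length cl = 2 * ncross D + 1")
  case True
  have "col_ok op D (nth (map (\<lambda>a. op a b) cl)) Suc = col_ok op D (\<lambda>k. op (cl ! k) b) Suc"
    by (rule col_ok_cong[OF assms(2)]) (simp add: True)
  then show ?thesis
    using col_ok_right_translate[OF assms(1)] by (simp add: tangle_colorings_def)
qed (simp add: tangle_colorings_def)

lemma boltzmann_map_right_translate:
  assumes "is_quandle op" "is_quandle_2cocycle op \<phi>" "valid_diagram D"
    and "cl \<in> tangle_colorings_at op D y"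
  shows "boltzmann \<phi> D (nth (map (\<lambda>a. op a b) cl)) Suc = boltzmann \<phi> D (nth cl) Suc"
proof -
  have "length cl = 2 * ncross D + 1" "col_ok op D (nth cl) Suc"
    "cl ! 0 = cl ! (2 * ncross D)"
    using assms(4) by (auto simp: tangle_colorings_at_def tangle_colorings_def)
  moreover have "boltzmann \<phi> D (nth (map (\<lambda>a. op a b) cl)) Suc
      = boltzmann \<phi> D (\<lambda>k. op (cl ! k) b) Suc"
    by (rule boltzmann_cong[OF assms(3)]) (simp add: calculation(1))
  ultimately show ?thesis using boltzmann_right_translate[OF assms(1-3)] by simp
qed

lemma bij_betw_map_right_translate:
  assumes q: "is_quandle op" and v: "valid_diagram D"
  shows "bij_betw (map (\<lambda>a. op a b)) (tangle_colorings_at op D y)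
           (tangle_colorings_at op D (op y b))"
proof -
  define R where "R = (\<lambda>a. op a b)"
  have "bij R" using q unfolding is_quandle_def R_def by blast
  then have inj: "inj R" and R_inv: "R (inv R a) = a" "inv R (R a) = a" for a
    by (auto simp: bij_is_inj bij_is_surj surj_f_inv_f)
  have iff: "map R cl \<in> tangle_colorings op D \<longleftrightarrow> cl \<in> tangle_colorings op D" for cl
    unfolding R_def by (rule map_right_translate_tangle_colorings_iff[OF q v])
  have "map R ` tangle_colorings_at op D y = tangle_colorings_at op D (R y)"
  proof (intro equalityI subsetI)
    fix cl' assume cl': "cl' \<in> tangle_colorings_at op D (R y)"
    define cl where "cl = map (inv R) cl'"
    have "map R cl = cl'" unfolding cl_def by (simp add: R_inv map_idI)
    moreover have "cl \<in> tangle_colorings_at op D y"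
    proof -
      have "cl' \<in> tangle_colorings op D" "length cl' = 2 * ncross D + 1"
        "cl' ! 0 = R y" "cl' ! (2 * ncross D) = R y"
        using cl' by (auto simp: tangle_colorings_at_def tangle_colorings_def)
      then show ?thesis
        using iff[of cl] \<open>map R cl = cl'\<close>
        by (simp add: tangle_colorings_at_def cl_def R_inv)
    qed
    ultimately show "cl' \<in> map R ` tangle_colorings_at op D y" by blast
  next
    fix cl' assume "cl' \<in> map R ` tangle_colorings_at op D y"
    then obtain cl where cl: "cl \<in> tangle_colorings_at op D y" and "cl' = map R cl" by blast
    moreover have "length cl = 2 * ncross D + 1"
      using cl by (simp add: tangle_colorings_at_def tangle_colorings_def)
    ultimately show "cl' \<in> tangle_colorings_at op D (R y)"
      using iff[of cl] by (simp add: tangle_colorings_at_def)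
  qed
  moreover have "inj_on (map R) (tangle_colorings_at op D y)"
    using inj by (simp add: inj_on_def inj_map_eq_map)
  ultimately show ?thesis unfolding R_def by (simp add: bij_betw_def)
qed

lemma tangle_invariant_right_translate:
  assumes "is_quandle op" "is_quandle_2cocycle op \<phi>" "valid_diagram D"
  shows "tangle_invariant op \<phi> D (op y b) = tangle_invariant op \<phi> D y"
proof
  fix l
  have "bij_betw (map (\<lambda>a. op a b))
      {cl \<in> tangle_colorings_at op D y. boltzmann \<phi> D (nth cl) Suc = l}
      {cl \<in> tangle_colorings_at op D (op y b). boltzmann \<phi> D (nth cl) Suc = l}"
    by (rule bij_betw_Collect[OF bij_betw_map_right_translate[OF assms(1,3)]])
      (simp add: boltzmann_map_right_translate[OF assms])
  then show "tangle_invariant op \<phi> D (op y b) l = tangle_invariant op \<phi> D y l"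
    unfolding tangle_invariant_eq_card by (simp add: bij_betw_same_card)
qed

lemma quandle_connected_ext_op:
  fixes \<phi> :: "'a \<Rightarrow> 'a \<Rightarrow> 'b::ab_group_add"
  assumes "quandle_connected (ext_op op \<phi>)"
  shows "quandle_connected op"
  unfolding quandle_connected_def
proof (intro allI)
  fix a c
  let ?RQ = "{(u, ext_op op \<phi> u v) | u v. True} \<union> {(ext_op op \<phi> u v, u) | u v. True}"
  let ?RX = "{(u, op u v) | u v. True} \<union> {(op u v, u) | u v. True}"
  have snd_ext_op: "snd (ext_op op \<phi> u v) = op (snd u) (snd v)" for u v
    by (cases u; cases v) (simp add: ext_op_def)
  have "(snd p, snd r) \<in> ?RX\<^sup>*" if "(p, r) \<in> ?RQ\<^sup>*" for p r
    using that
  proof (induction rule: rtrancl_induct)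
    case (step y z)
    then have "(snd y, snd z) \<in> ?RX" by (auto simp: snd_ext_op)
    with step.IH show ?case by (rule rtrancl_into_rtrancl)
  qed simp
  moreover have "((0::'b, a), (0, c)) \<in> ?RQ\<^sup>*"
    using assms unfolding quandle_connected_def by blast
  ultimately show "(a, c) \<in> ?RX\<^sup>*" by fastforce
qed

lemma quandle_connected_invariant_const:
  assumes "quandle_connected op" and invariant: "\<And>y b. f (op y b) = f y"
  shows "f a = f c"
proof -
  have "(a, c) \<in> ({(u, op u v) | u v. True} \<union> {(op u v, u) | u v. True})\<^sup>*"
    using assms(1) unfolding quandle_connected_def by blast
  then show ?thesis
    by (induction rule: rtrancl_induct) (use invariant in auto)
qed

lemma cocycle_invariant_eq_card_closed_tangle_colorings:
  assumes v: "valid_diagram D"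
  shows "cocycle_invariant op \<phi> D l = int (card {cl \<in> tangle_colorings op D.
      cl ! 0 = cl ! (2 * ncross D) \<and> boltzmann \<phi> D (nth cl) Suc = l})"
proof (cases "ncross D = 0")
  case True
  then have "knot_next D = Suc" by (simp add: knot_next_def fun_eq_iff)
  with True show ?thesis
    by (simp add: cocycle_invariant_def knot_colorings_def tangle_colorings_def)
next
  case False
  have "bij_betw (\<lambda>cl. cl @ [cl ! 0])
      {cl \<in> knot_colorings op D. boltzmann \<phi> D (nth cl) (knot_next D) = l}
      {cl \<in> {cl \<in> tangle_colorings op D. cl ! 0 = cl ! (2 * ncross D)}.
         boltzmann \<phi> D (nth cl) Suc = l}"
    by (rule bij_betw_Collect[OF bij_betw_knot_colorings_tangle_colorings[OF v False]])
      (use False in \<open>simp add: boltzmann_closing[OF v] knot_colorings_def\<close>)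
  then show ?thesis
    unfolding cocycle_invariant_def by (simp add: bij_betw_same_card conj_assoc)
qed

lemma finite_tangle_colorings: "finite (tangle_colorings (op :: 'a::finite \<Rightarrow> _) D)"
  by (rule finite_subset[OF _ finite_lists_length_eq[of UNIV "2 * ncross D + 1"]])
    (auto simp: tangle_colorings_def)

lemma cocycle_invariant_eq_sum_tangle_invariant:
  fixes op :: "'a::finite \<Rightarrow> 'a \<Rightarrow> 'a"
  assumes "valid_diagram D"
  shows "cocycle_invariant op \<phi> D = (\<lambda>l. \<Sum>y\<in>UNIV. tangle_invariant op \<phi> D y l)"
proof
  fix l
  let ?F = "\<lambda>y. {cl \<in> tangle_colorings_at op D y. boltzmann \<phi> D (nth cl) Suc = l}"
  have "(\<Sum>y\<in>UNIV. card (?F y)) = card (\<Union>y. ?F y)"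
    by (rule card_UN_disjoint[symmetric])
      (auto intro: finite_subset[OF _ finite_tangle_colorings] simp: tangle_colorings_at_def)
  also have "(\<Union>y. ?F y) = {cl \<in> tangle_colorings op D.
      cl ! 0 = cl ! (2 * ncross D) \<and> boltzmann \<phi> D (nth cl) Suc = l}"
    by (auto simp: tangle_colorings_at_def)
  finally show "cocycle_invariant op \<phi> D l = (\<Sum>y\<in>UNIV. tangle_invariant op \<phi> D y l)"
    by (simp add: cocycle_invariant_eq_card_closed_tangle_colorings[OF assms]
        tangle_invariant_eq_card flip: of_nat_sum)
qed

theorem mainTheorem3:
  fixes op :: "'a::finite \<Rightarrow> 'a \<Rightarrow> 'a"
    and \<phi> :: "'a \<Rightarrow> 'a \<Rightarrow> 'b::{ab_group_add, finite}"
    and D :: gauss_diagram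
    and x :: 'a
  assumes "is_quandle op"
    and "is_quandle_2cocycle op \<phi>"
    and "quandle_connected (ext_op op \<phi>)"
    and "valid_diagram D"
    and "planar_diagram D"
  shows "cocycle_invariant op \<phi> D = (\<lambda>l. \<Sum>y\<in>UNIV. tangle_invariant op \<phi> D y l)
       \<and> (\<lambda>l. \<Sum>y\<in>UNIV. tangle_invariant op \<phi> D y l)
           = (\<lambda>l. int (card (UNIV :: 'a set)) * tangle_invariant op \<phi> D x l)"
proof
  show "cocycle_invariant op \<phi> D = (\<lambda>l. \<Sum>y\<in>UNIV. tangle_invariant op \<phi> D y l)"
    using cocycle_invariant_eq_sum_tangle_invariant[OF assms(4)] .
  have const: "tangle_invariant op \<phi> D y = tangle_invariant op \<phi> D x" for y
    by (rule quandle_connected_invariant_const[OF quandle_connected_ext_op[OF assms(3)]])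
      (rule tangle_invariant_right_translate[OF assms(1,2,4)])
  show "(\<lambda>l. \<Sum>y\<in>UNIV. tangle_invariant op \<phi> D y l)
      = (\<lambda>l. int (card (UNIV :: 'a set)) * tangle_invariant op \<phi> D x l)"
  proof
    fix l
    have "(\<Sum>y\<in>UNIV. tangle_invariant op \<phi> D y l) = (\<Sum>y\<in>(UNIV :: 'a set). tangle_invariant op \<phi> D x l)"
      by (rule sum.cong[OF refl]) (rule fun_cong[OF const])
    also have "\<dots> = int (card (UNIV :: 'a set)) * tangle_invariant op \<phi> D x l"
      by (rule sum_constant)
    finally show "(\<Sum>y\<in>UNIV. tangle_invariant op \<phi> D y l)
        = int (card (UNIV :: 'a set)) * tangle_invariant op \<phi> D x l" .
  qed
qed

end
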